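(* Let $\hat\mu\in\operatorname{conv}\{g_1,\dots,g_N\}$ and run the MW–MMW rounds for the fixed center $\hat\mu$ with uniform initialization $w^{(1)}=(1/N,\dots,1/N)$, with $0<\eta_\rho\nu\le1/2$, $0<\eta_w\nu\le1/2$. Then $\bar S=S(\bar w;\hat\mu)$ and $$\|\bar S\|_{op}\le(1+\eta_\rho\nu)(1+\eta_w\nu)\,\mathrm{OPT}(\hat\mu)+\frac{(1+\eta_\rho\nu)\log\frac1{1-\epsilon}}{T\eta_w}+\frac{\log p}{T\eta_\rho}.$$ Consequently, if $\nu>0$, $\epsilon\in(0,1)$, $p\ge2$, and one chooses $$\eta_w=\frac1\nu\sqrt{\frac{\log\frac1{1-\epsilon}}{T}},\quad \eta_\rho=\frac1\nu\sqrt{\frac{\log p}{T}},\quad T\ge4\max\Big\{\log\tfrac1{1-\epsilon},\log p\Big\},$$ then $$\gamma(\bar w;\hat\mu)-\mathrm{OPT}(\hat\mu)\le 4\nu\left(\sqrt{\frac{\log\frac1{1-\epsilon}}{T}}+\sqrt{\frac{\log p}{T}}\right).$$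
   Context: Fix integers $N\ge1$, $p\ge1$, $\epsilon\in[0,1)$ and vectors $g_1,\dots,g_N\in\mathbb R^p$. The capped simplex is $\Delta_{N,\epsilon}=\{w\in\mathbb R^N:\sum_n w_n=1,\ 0\le w_n\le \frac{1}{(1-\epsilon)N}\}$; density matrices $\mathfrak D_p=\{\rho\in\mathbb R^{p\times p}:\rho=\rho^\top\succeq0,\mathrm{Tr}\,\rho=1\}$; $\langle A,B\rangle=\mathrm{Tr}(A^\top B)$. For a center $\hat\mu$ and $w\in\mathbb R^N$: $S(w;\hat\mu)=\sum_n w_n(g_n-\hat\mu)(g_n-\hat\mu)^\top$, $\gamma(w;\hat\mu)=\|S(w;\hat\mu)\|_{op}$, $\mathrm{OPT}(\hat\mu)=\min_{w\in\Delta_{N,\epsilon}}\max_{\rho\in\mathfrak D_p}\langle S(w;\hat\mu),\rho\rangle$; $\nu=\max_{i,j}\|g_i-g_j\|_2^2$. Relative entropy: $\mathrm{RE}(w\|v)=\sum_n w_n\log(w_n/v_n)$. MW–MMW rounds for a fixed center $\hat\mu$: $z_n=g_n-\hat\mu$, initial weights $w^{(1)}$, step sizes $\eta_w,\eta_\rho>0$, $T\ge1$. For $t=1,\dots,T$: $S^{(t)}=\sum_n w^{(t)}_n z_nz_n^\top$; $\rho^{(t)}=\exp(\eta_\rho\sum_{t'=1}^t S^{(t')})/\mathrm{Tr}\exp(\eta_\rho\sum_{t'=1}^tS^{(t')})$; $m^{(t)}_n=z_n^\top\rho^{(t)}z_n$; $\tilde w^{(t)}_n=w^{(t)}_n(1-\eta_w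 m^{(t)}_n)$; $w^{(t+1)}=\arg\min_{w\in\Delta_{N,\epsilon}}\mathrm{RE}(w\|\tilde w^{(t)})$. Outputs: $\bar w=\frac1T\sum_{t=1}^Tw^{(t)}$, $\bar S=\frac1T\sum_{t=1}^TS^{(t)}$. *)

theory Defs
  imports "HOL-Analysis.Analysis"
begin

text \<open>Index types: 'n (with N = CARD('n)) indexes the data points g_1..g_N,
  'p (with p = CARD('p)) indexes the coordinates of R^p. Weights are functions 'n => real.\<close>

definition outer :: "real^'p \<Rightarrow> real^'p \<Rightarrow> real^'p^'p" where
  "outer x y = (\<chi> i j. x$i * y$j)"

definition capped_simplex :: "real \<Rightarrow> ('n::finite \<Rightarrow> real) set" where
  "capped_simplex eps = {w. (\<Sum>n\<in>UNIV. w n) = 1 \<and>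
      (\<forall>n. 0 \<le> w n \<and> w n \<le> 1 / ((1 - eps) * real CARD('n)))}"

definition density_matrices :: "(real^'p^'p) set" where
  "density_matrices = {\<rho>. transpose \<rho> = \<rho> \<and> (\<forall>x. 0 \<le> x \<bullet> (\<rho> *v x)) \<and> trace \<rho> = 1}"

definition mat_inner :: "real^'p^'p \<Rightarrow> real^'p^'p \<Rightarrow> real" where
  "mat_inner A B = trace (transpose A ** B)"

definition op_norm :: "real^'p^'p \<Rightarrow> real" where
  "op_norm A = onorm (\<lambda>x. A *v x)"

definition Smat :: "('n::finite \<Rightarrow> real^'p) \<Rightarrow> real^'p \<Rightarrow> ('n \<Rightarrow> real) \<Rightarrow> real^'p^'p" where
  "Smat g mu w = (\<Sum>n\<in>UNIV. w n *\<^sub>R outer (g n - mu) (g n - mu))"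

definition gamma_val :: "('n::finite \<Rightarrow> real^'p) \<Rightarrow> real^'p \<Rightarrow> ('n \<Rightarrow> real) \<Rightarrow> real" where
  "gamma_val g mu w = op_norm (Smat g mu w)"

definition OPT :: "real \<Rightarrow> ('n::finite \<Rightarrow> real^'p) \<Rightarrow> real^'p \<Rightarrow> real" where
  "OPT eps g mu = (INF w\<in>capped_simplex eps. SUP \<rho>\<in>density_matrices. mat_inner (Smat g mu w) \<rho>)"

definition nu :: "('n::finite \<Rightarrow> real^'p) \<Rightarrow> real" where
  "nu g = Max {(norm (g i - g j))\<^sup>2 | i j. True}"

definition rel_ent :: "('n::finite \<Rightarrow> real) \<Rightarrow> ('n \<Rightarrow> real) \<Rightarrow> real" where
  "rel_ent w v = (\<Sum>n\<in>UNIV. w n * ln (w n / v n))"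

primrec matpow :: "real^'p^'p \<Rightarrow> nat \<Rightarrow> real^'p^'p" where
  "matpow A 0 = mat 1"
| "matpow A (Suc k) = A ** matpow A k"

definition mexp :: "real^'p^'p \<Rightarrow> real^'p^'p" where
  "mexp A = (\<Sum>k. (1 / fact k) *\<^sub>R matpow A k)"

text \<open>Quantities of the MW-MMW rounds, as functions of the weight sequence w (rounds indexed from 1).\<close>
definition S_round :: "('n::finite \<Rightarrow> real^'p) \<Rightarrow> real^'p \<Rightarrow> (nat \<Rightarrow> 'n \<Rightarrow> real) \<Rightarrow> nat \<Rightarrow> real^'p^'p" where
  "S_round g mu w t = Smat g mu (w t)"

definition rho_round :: "('n::finite \<Rightarrow> real^'p) \<Rightarrow> real^'p \<Rightarrow> real \<Rightarrow> (nat \<Rightarrow> 'n \<Rightarrow> real) \<Rightarrow> nat \<Rightarrow> real^'p^'p" where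
  "rho_round g mu eta_rho w t =
     (let E = mexp (eta_rho *\<^sub>R (\<Sum>t'\<in>{1..t}. S_round g mu w t')) in (1 / trace E) *\<^sub>R E)"

definition m_round :: "('n::finite \<Rightarrow> real^'p) \<Rightarrow> real^'p \<Rightarrow> real \<Rightarrow> (nat \<Rightarrow> 'n \<Rightarrow> real) \<Rightarrow> nat \<Rightarrow> 'n \<Rightarrow> real" where
  "m_round g mu eta_rho w t n = (g n - mu) \<bullet> (rho_round g mu eta_rho w t *v (g n - mu))"

definition wtilde_round :: "('n::finite \<Rightarrow> real^'p) \<Rightarrow> real^'p \<Rightarrow> real \<Rightarrow> real \<Rightarrow> (nat \<Rightarrow> 'n \<Rightarrow> real) \<Rightarrow> nat \<Rightarrow> 'n \<Rightarrow> real" where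
  "wtilde_round g mu eta_w eta_rho w t n = w t n * (1 - eta_w * m_round g mu eta_rho w t n)"

definition mw_mmw_run :: "real \<Rightarrow> ('n::finite \<Rightarrow> real^'p) \<Rightarrow> real^'p \<Rightarrow> real \<Rightarrow> real \<Rightarrow> nat \<Rightarrow> (nat \<Rightarrow> 'n \<Rightarrow> real) \<Rightarrow> bool" where
  "mw_mmw_run eps g mu eta_w eta_rho T w \<longleftrightarrow>
     w 1 = (\<lambda>n. 1 / real CARD('n)) \<and>
     (\<forall>t\<in>{1..T}. w (Suc t) \<in> capped_simplex eps \<and>
        (\<forall>v\<in>capped_simplex eps. rel_ent (w (Suc t)) (wtilde_round g mu eta_w eta_rho w t)
                                  \<le> rel_ent v (wtilde_round g mu eta_w eta_rho w t)))"

definition w_bar :: "nat \<Rightarrow> (nat \<Rightarrow> 'n \<Rightarrow> real) \<Rightarrow> 'n \<Rightarrow> real" where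
  "w_bar T w n = (1 / real T) * (\<Sum>t\<in>{1..T}. w t n)"

definition S_bar :: "('n::finite \<Rightarrow> real^'p) \<Rightarrow> real^'p \<Rightarrow> nat \<Rightarrow> (nat \<Rightarrow> 'n \<Rightarrow> real) \<Rightarrow> real^'p^'p" where
  "S_bar g mu T w = (1 / real T) *\<^sub>R (\<Sum>t\<in>{1..T}. S_round g mu w t)"

end

theory Submission
  imports Defs
begin

text \<open>The weight player runs multiplicative weights against the losses
  \<open>m\<^sub>t n = z\<^sub>n\<^sup>T \<rho>\<^sub>t z\<^sub>n\<close>. Each update is a relative-entropy projection onto the capped simplex,
  so the generalised Pythagorean inequality together with \<open>-ln (1 - x) \<le> x + x\<^sup>2\<close> bounds its
  regret against any comparator \<open>u\<close> by \<open>ln (1/(1 - \<epsilon>)) / \<eta>\<^sub>w\<close>, with multiplicative slack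
  \<open>1 + \<eta>\<^sub>w \<nu>\<close>; the losses may depend on the weights themselves.
  The matrix player plays the Gibbs state of \<open>\<eta>\<^sub>\<rho> \<Sum>\<^sub>t S\<^sub>t\<close>. By the Gibbs variational principle
  the potential \<open>ln tr exp (\<eta>\<^sub>\<rho> \<Sum>\<^sub>t S\<^sub>t)\<close> grows by at most \<open>\<eta>\<^sub>\<rho> \<langle>S\<^sub>t, \<rho>\<^sub>t\<rangle>\<close> per round, and as
  \<open>\<Sum>\<^sub>t S\<^sub>t = T S_bar\<close> is positive semidefinite its norm is at most the potential over \<open>\<eta>\<^sub>\<rho>\<close>.
  Since \<open>\<langle>S\<^sub>t, \<rho>\<^sub>t\<rangle>\<close> is exactly the weight player's loss, chaining the two regret bounds and
  taking the infimum over \<open>u\<close> gives \<open>\<parallel>S_bar\<parallel> \<le> (1 + \<eta>\<^sub>w \<nu>) OPT + ln (1/(1 - \<epsilon>)) / (T \<eta>\<^sub>w) +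
  ln p / (T \<eta>\<^sub>\<rho>)\<close>, which implies the first claim; the second is arithmetic using \<open>OPT \<le> \<nu>\<close>.\<close>

section \<open>Outer products, trace and the trace pairing\<close>

lemma outer_mult_vec: "outer x y *v v = (y \<bullet> v) *\<^sub>R x"
  by (simp add: outer_def matrix_vector_mult_def vec_eq_iff inner_vec_def sum_distrib_left algebra_simps)

lemma transpose_outer: "transpose (outer x y) = outer y x"
  by (simp add: outer_def transpose_def vec_eq_iff)

lemma trace_outer: "trace (outer x y) = x \<bullet> y"
  by (simp add: outer_def trace_def inner_vec_def)

lemma trace_sum: "trace (\<Sum>i\<in>I. f i) = (\<Sum>i\<in>I. trace (f i))"
  unfolding trace_def by (simp add: sum_component) (rule sum.swap)

lemma trace_scaleR: "trace (c *\<^sub>R A) = c * trace A"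
  unfolding trace_def by (simp add: sum_distrib_left)

lemma transpose_sum: "transpose (\<Sum>i\<in>I. f i) = (\<Sum>i\<in>I. transpose (f i))"
  by (induction I rule: infinite_finite_induct) (auto simp: transpose_def vec_eq_iff)

lemma sum_matrix_vector_mult: "(\<Sum>i\<in>I. f i) *v (x::real^'a) = (\<Sum>i\<in>I. f i *v x)"
  by (induction I rule: infinite_finite_induct) (auto simp: matrix_vector_mult_add_rdistrib)

lemma symmetric_inner_matrix_vector:
  assumes "transpose A = (A::real^'p^'p)"
  shows "x \<bullet> (A *v y) = y \<bullet> (A *v x)"
proof -
  have "x \<bullet> (A *v y) = (x v* A) \<bullet> y" by (simp add: dot_lmul_matrix)
  also have "x v* A = A *v x" using vector_transpose_matrix[of x A] assms by simp
  finally show ?thesis by (simp add: inner_commute)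
qed

lemma mat_inner_eq_sum: "mat_inner X Y = (\<Sum>r\<in>UNIV. \<Sum>s\<in>UNIV. X$r$s * Y$r$s)"
  unfolding mat_inner_def trace_def matrix_matrix_mult_def transpose_def
  by simp (rule sum.swap)

lemma mat_inner_commute: "mat_inner X Y = mat_inner Y X"
  unfolding mat_inner_eq_sum by (simp add: mult.commute)

lemma mat_inner_outer: "mat_inner X (outer u u) = u \<bullet> (X *v u)"
  unfolding mat_inner_eq_sum outer_def inner_vec_def matrix_vector_mult_def
  by (simp add: sum_distrib_left algebra_simps)

lemma mat_inner_sum_left: "mat_inner (\<Sum>i\<in>I. f i) Y = (\<Sum>i\<in>I. mat_inner (f i) Y)"
  by (induction I rule: infinite_finite_induct)
    (simp_all add: mat_inner_eq_sum distrib_right sum.distrib)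

lemma mat_inner_scaleR_left: "mat_inner (c *\<^sub>R X) Y = c * mat_inner X Y"
  unfolding mat_inner_eq_sum by (simp add: sum_distrib_left mult.assoc)

lemma mat_inner_sum_right: "mat_inner X (\<Sum>i\<in>I. f i) = (\<Sum>i\<in>I. mat_inner X (f i))"
  using mat_inner_sum_left[of f I X] by (simp add: mat_inner_commute)

lemma mat_inner_scaleR_right: "mat_inner X (c *\<^sub>R Y) = c * mat_inner X Y"
  using mat_inner_scaleR_left[of c Y X] by (simp add: mat_inner_commute)

section \<open>Spectral decomposition of symmetric matrices\<close>

definition onb :: "('p::finite \<Rightarrow> real^'p) \<Rightarrow> bool" where
  "onb u \<longleftrightarrow> (\<forall>i j. u i \<bullet> u j = (if i = j then 1 else 0)) \<and> (\<forall>x. (\<forall>i. u i \<bullet> x = 0) \<longrightarrow> x = 0)"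

definition spec_mat :: "('p::finite \<Rightarrow> real^'p) \<Rightarrow> ('p \<Rightarrow> real) \<Rightarrow> real^'p^'p" where
  "spec_mat u l = (\<Sum>i\<in>UNIV. l i *\<^sub>R outer (u i) (u i))"

lemma onb_inner: "onb u \<Longrightarrow> u i \<bullet> u j = (if i = j then 1 else 0)"
  unfolding onb_def by blast

lemma onb_sum_inner: "onb u \<Longrightarrow> (\<Sum>i\<in>UNIV. c i * (u j \<bullet> u i)) = c j"
  by (simp add: onb_inner if_distrib cong: if_cong)

lemma onb_expansion:
  assumes "onb u"
  shows "x = (\<Sum>i\<in>UNIV. (u i \<bullet> x) *\<^sub>R u i)"
proof -
  have "u j \<bullet> (x - (\<Sum>i\<in>UNIV. (u i \<bullet> x) *\<^sub>R u i)) = 0" for j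
    using onb_sum_inner[OF assms, of "\<lambda>i. u i \<bullet> x" j]
    by (simp add: inner_diff_right inner_sum_right)
  then have "x - (\<Sum>i\<in>UNIV. (u i \<bullet> x) *\<^sub>R u i) = 0"
    using assms unfolding onb_def by blast
  then show ?thesis by simp
qed

lemma onb_parseval:
  assumes "onb u"
  shows "x \<bullet> x = (\<Sum>i\<in>UNIV. (u i \<bullet> x)\<^sup>2)"
  by (subst (2) onb_expansion[OF assms])
    (simp add: inner_sum_right power2_eq_square inner_commute)

lemma onb_norm_sum:
  assumes "onb u"
  shows "(norm (\<Sum>i\<in>UNIV. c i *\<^sub>R u i))\<^sup>2 = (\<Sum>i\<in>UNIV. (c i)\<^sup>2)"
proof -
  have "u j \<bullet> (\<Sum>i\<in>UNIV. c i *\<^sub>R u i) = c j" for j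
    using onb_sum_inner[OF assms, of c j] by (simp add: inner_sum_right)
  then show ?thesis
    using onb_parseval[OF assms, of "\<Sum>i\<in>UNIV. c i *\<^sub>R u i"] by (simp add: power2_norm_eq_inner)
qed

lemma spec_mat_mult_vec: "spec_mat u l *v x = (\<Sum>i\<in>UNIV. (l i * (u i \<bullet> x)) *\<^sub>R u i)"
  unfolding spec_mat_def
  by (simp add: sum_matrix_vector_mult scaleR_matrix_vector_assoc[symmetric] outer_mult_vec)

lemma spec_mat_eigen:
  assumes "onb u"
  shows "spec_mat u l *v u j = l j *\<^sub>R u j"
proof -
  have "spec_mat u l *v u j = (\<Sum>i\<in>UNIV. if i = j then l j *\<^sub>R u j else 0)"
    unfolding spec_mat_mult_vec by (intro sum.cong) (auto simp: onb_inner[OF assms] inner_commute)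
  then show ?thesis by simp
qed

lemma spec_mat_eigenvalue: "onb u \<Longrightarrow> u i \<bullet> (spec_mat u l *v u i) = l i"
  by (simp add: spec_mat_eigen onb_inner)

lemma spec_mat_one:
  assumes "onb u"
  shows "spec_mat u (\<lambda>_. 1) = mat 1"
  unfolding matrix_eq spec_mat_mult_vec using onb_expansion[OF assms, symmetric] by simp

lemma scaleR_spec_mat: "c *\<^sub>R spec_mat u l = spec_mat u (\<lambda>i. c * l i)"
  by (simp add: spec_mat_def scaleR_sum_right)

lemma transpose_spec_mat: "transpose (spec_mat u l) = spec_mat u l"
  unfolding spec_mat_def transpose_sum transpose_scalar transpose_outer ..

lemma trace_spec_mat: "onb u \<Longrightarrow> trace (spec_mat u l) = (\<Sum>i\<in>UNIV. l i)"
  unfolding spec_mat_def trace_sum trace_scaleR trace_outer by (simp add: onb_inner)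

lemma quad_spec_mat: "x \<bullet> (spec_mat u l *v x) = (\<Sum>i\<in>UNIV. l i * (u i \<bullet> x)\<^sup>2)"
  unfolding spec_mat_mult_vec
  by (simp add: inner_sum_right power2_eq_square inner_commute mult.assoc)

lemma mat_inner_spec_mat: "mat_inner X (spec_mat u l) = (\<Sum>i\<in>UNIV. l i * (u i \<bullet> (X *v u i)))"
  unfolding spec_mat_def mat_inner_sum_right mat_inner_scaleR_right mat_inner_outer ..

lemma trace_eq_sum_onb:
  assumes "onb u"
  shows "trace M = (\<Sum>i\<in>UNIV. u i \<bullet> (M *v u i))"
proof -
  have "trace M = mat_inner M (mat 1)"
    unfolding mat_inner_def by (simp add: matrix_mul_rid trace_def transpose_def)
  then show ?thesis
    by (simp add: spec_mat_one[OF assms, symmetric] mat_inner_spec_mat)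
qed

lemma matpow_spec_mat:
  assumes "onb u"
  shows "matpow (spec_mat u l) k = spec_mat u (\<lambda>i. l i ^ k)"
proof (induction k)
  case 0
  then show ?case using spec_mat_one[OF assms] by simp
next
  case (Suc k)
  have "spec_mat u l *v (spec_mat u (\<lambda>i. l i ^ k) *v x) = spec_mat u (\<lambda>i. l i ^ Suc k) *v x" for x
    by (simp add: spec_mat_mult_vec[of u "\<lambda>i. l i ^ k"] vec.sum matrix_vector_mult_scaleR
        spec_mat_eigen[OF assms]) (simp add: spec_mat_mult_vec algebra_simps)
  then show ?case
    by (simp add: Suc matrix_eq matrix_vector_mul_assoc[symmetric])
qed

lemma mexp_spec_mat:
  assumes "onb u"
  shows "mexp (spec_mat u l) = spec_mat u (\<lambda>i. exp (l i))"
proof -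
  have "(1 / fact k) *\<^sub>R matpow (spec_mat u l) k
      = (\<Sum>i\<in>UNIV. (l i ^ k /\<^sub>R fact k) *\<^sub>R outer (u i) (u i))" for k
    by (simp only: matpow_spec_mat[OF assms])
      (simp add: spec_mat_def scaleR_sum_right divide_inverse mult.commute)
  moreover have "(\<lambda>k. \<Sum>i\<in>UNIV. (l i ^ k /\<^sub>R fact k) *\<^sub>R outer (u i) (u i))
      sums spec_mat u (\<lambda>i. exp (l i))"
    unfolding spec_mat_def by (intro sums_sum sums_scaleR_left exp_converges)
  ultimately show ?thesis
    unfolding mexp_def by (simp add: sums_iff)
qed

lemma linear_le_quadratic_imp_zero:
  fixes c M :: real
  assumes "\<And>t. 2 * t * c \<le> t\<^sup>2 * M"
  shows "c = 0"
proof -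
  define D where "D = \<bar>M\<bar> + 1"
  define t where "t = c / D"
  have D: "D > 0" by (simp add: D_def add_pos_nonneg)
  have "2 * t * c * D\<^sup>2 \<le> t\<^sup>2 * M * D\<^sup>2"
    using assms[of t] by (rule mult_right_mono) simp
  moreover have "2 * t * c * D\<^sup>2 = c\<^sup>2 * 2 * D" and "t\<^sup>2 * M * D\<^sup>2 = c\<^sup>2 * M"
    using D by (simp_all add: t_def power2_eq_square)
  ultimately have "c\<^sup>2 * 2 * D \<le> c\<^sup>2 * M" by linarith
  then have "c\<^sup>2 * (2 * D - M) \<le> 0"
    by (simp add: algebra_simps)
  moreover have "2 * D - M > 0" by (simp add: D_def)
  ultimately show ?thesis
    by (simp add: mult_le_0_iff)
qed

text \<open>A maximiser of the Rayleigh quotient on a subspace is stationary: the quadratic form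
  restricted to the line through \<open>v + t w\<close> has a maximum at \<open>t = 0\<close>.\<close>
lemma rayleigh_maximiser_orthogonal:
  fixes A :: "real^'p^'p"
  assumes sym: "transpose A = A" and W: "subspace W"
    and v: "v \<in> W" "norm v = 1"
    and max: "\<And>y. y \<in> W \<Longrightarrow> norm y = 1 \<Longrightarrow> y \<bullet> (A *v y) \<le> v \<bullet> (A *v v)"
    and w: "w \<in> W" "w \<bullet> v = 0"
  shows "w \<bullet> (A *v v) = 0"
proof (rule linear_le_quadratic_imp_zero)
  fix t :: real
  define y where "y = v + t *\<^sub>R w"
  have "v \<bullet> v = 1" using v(2) by (simp add: norm_eq_1)
  then have yy: "y \<bullet> y = 1 + t\<^sup>2 * (w \<bullet> w)"
    using w by (simp add: y_def inner_add_left inner_add_right inner_commute power2_eq_square)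
  then have "0 < y \<bullet> y" by (simp add: add_pos_nonneg)
  then have "norm y > 0" by simp
  moreover have "y \<in> W" using v w W by (simp add: y_def subspace_add subspace_scale)
  ultimately have "((1 / norm y) *\<^sub>R y) \<bullet> (A *v ((1 / norm y) *\<^sub>R y)) \<le> v \<bullet> (A *v v)"
    using W by (intro max) (auto simp: subspace_scale)
  then have "y \<bullet> (A *v y) \<le> (v \<bullet> (A *v v)) * (y \<bullet> y)"
    using \<open>norm y > 0\<close>
    by (simp add: matrix_vector_mult_scaleR field_simps power2_eq_square dot_square_norm)
  moreover have "y \<bullet> (A *v y) = v \<bullet> (A *v v) + 2 * t * (w \<bullet> (A *v v)) + t\<^sup>2 * (w \<bullet> (A *v w))"
    using symmetric_inner_matrix_vector[OF sym, of v w]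
    by (simp add: y_def matrix_vector_right_distrib matrix_vector_mult_scaleR power2_eq_square
        algebra_simps)
  ultimately show "2 * t * (w \<bullet> (A *v v)) \<le> t\<^sup>2 * ((v \<bullet> (A *v v)) * (w \<bullet> w) - w \<bullet> (A *v w))"
    unfolding yy by (simp add: algebra_simps)
qed

lemma symmetric_invariant_subspace_eigenvector:
  fixes A :: "real^'p^'p"
  assumes sym: "transpose A = A" and W: "subspace W" "W \<noteq> {0}"
    and inv: "\<And>x. x \<in> W \<Longrightarrow> A *v x \<in> W"
  obtains v l where "v \<in> W" "norm v = 1" "A *v v = l *\<^sub>R v"
proof -
  define K where "K = W \<inter> sphere 0 1"
  have "compact K"
    unfolding K_def using W(1) by (metis Int_commute closed_subspace compact_Int_closed compact_sphere)
  moreover obtain x where "x \<in> W" "x \<noteq> 0" using W subspace_0 by blast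
  then have "(1 / norm x) *\<^sub>R x \<in> K" using W(1) by (simp add: K_def subspace_scale)
  then have "K \<noteq> {}" by blast
  ultimately have "\<exists>v\<in>K. \<forall>y\<in>K. y \<bullet> (A *v y) \<le> v \<bullet> (A *v v)"
    by (intro continuous_attains_sup continuous_intros)
  then obtain v where vK: "v \<in> K" and vmax: "\<And>y. y \<in> K \<Longrightarrow> y \<bullet> (A *v y) \<le> v \<bullet> (A *v v)"
    by blast
  have v: "v \<in> W" "norm v = 1" using vK by (auto simp: K_def)
  then have "v \<bullet> v = 1" by (simp add: norm_eq_1)
  define r where "r = A *v v - (v \<bullet> (A *v v)) *\<^sub>R v"
  have "r \<in> W" using v inv W(1) by (simp add: r_def subspace_diff subspace_scale)
  moreover have rv: "r \<bullet> v = 0"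
    using \<open>v \<bullet> v = 1\<close> by (simp add: r_def inner_diff_left inner_diff_right inner_commute)
  ultimately have "r \<bullet> (A *v v) = 0"
    using vmax by (intro rayleigh_maximiser_orthogonal[OF sym W(1) v]) (auto simp: K_def)
  then have "r \<bullet> r = 0" using rv by (simp add: r_def inner_diff_right)
  then have "A *v v = (v \<bullet> (A *v v)) *\<^sub>R v" by (simp add: r_def)
  with v show thesis using that by blast
qed

definition orthonormal_set :: "(real^'p) set \<Rightarrow> bool" where
  "orthonormal_set S \<longleftrightarrow> (\<forall>x\<in>S. \<forall>y\<in>S. x \<bullet> y = (if x = y then 1 else 0))"

lemma symmetric_orthonormal_eigenvectors:
  fixes A :: "real^'p^'p"
  assumes sym: "transpose A = A" and "k \<le> CARD('p)"
  shows "\<exists>S. finite S \<and> card S = k \<and> orthonormal_set S \<and> (\<forall>x\<in>S. \<exists>l. A *v x = l *\<^sub>R x)"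
  using assms(2)
proof (induction k)
  case 0
  then show ?case by (auto simp: orthonormal_set_def)
next
  case (Suc k)
  then obtain S where S: "finite S" "card S = k" "orthonormal_set S" "\<forall>x\<in>S. \<exists>l. A *v x = l *\<^sub>R x"
    by auto
  define W where "W = {x. \<forall>s\<in>S. s \<bullet> x = 0}"
  have W: "subspace W" by (auto simp: W_def subspace_def inner_add_right)
  have "dim S < DIM(real^'p)" using S Suc.prems dim_le_card[OF span_superset, of S] by simp
  then obtain x where "x \<noteq> 0" "\<And>y. y \<in> span S \<Longrightarrow> orthogonal x y"
    using orthogonal_to_subspace_exists by blast
  then have "x \<in> W" "x \<noteq> 0" by (auto simp: W_def orthogonal_def inner_commute span_base)
  then have "W \<noteq> {0}" by blast
  moreover have "A *v y \<in> W" if "y \<in> W" for y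
  proof -
    have "s \<bullet> (A *v y) = 0" if "s \<in> S" for s
      using S(4) that \<open>y \<in> W\<close> symmetric_inner_matrix_vector[OF sym, of s y]
      by (auto simp: W_def inner_commute)
    then show ?thesis by (simp add: W_def)
  qed
  ultimately obtain v l where v: "v \<in> W" "norm v = 1" "A *v v = l *\<^sub>R v"
    by (rule symmetric_invariant_subspace_eigenvector[OF sym W])
  have "v \<bullet> v = 1" using v(2) by (simp add: norm_eq_1)
  with v(1) have "v \<notin> S" by (force simp: W_def)
  show ?case
  proof (intro exI[of _ "insert v S"] conjI)
    show "orthonormal_set (insert v S)"
      using S(3) v(1) \<open>v \<bullet> v = 1\<close> by (auto simp: orthonormal_set_def W_def inner_commute)
  qed (use S v \<open>v \<notin> S\<close> in auto)
qed

lemma orthonormal_set_complete: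
  fixes S :: "(real^'p) set"
  assumes S: "finite S" "card S = CARD('p)" "orthonormal_set S" and x: "\<And>s. s \<in> S \<Longrightarrow> x \<bullet> s = 0"
  shows "x = 0"
proof (rule ccontr)
  assume "x \<noteq> 0"
  with x have "x \<notin> S" by force
  have "pairwise orthogonal (insert x S)"
    using S(3) x unfolding pairwise_def orthogonal_def orthonormal_set_def by (auto simp: inner_commute)
  moreover have "0 \<notin> insert x S" using S(3) \<open>x \<noteq> 0\<close> unfolding orthonormal_set_def by force
  ultimately have "card (insert x S) \<le> DIM(real^'p)"
    using independent_bound pairwise_orthogonal_independent by blast
  with \<open>x \<notin> S\<close> S(1,2) show False by simp
qed

theorem symmetric_spectral_decomposition:
  fixes A :: "real^'p^'p"
  assumes sym: "transpose A = A"
  obtains u l where "onb u" "A = spec_mat u l"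
proof -
  obtain S where S: "finite S" "card S = CARD('p)" "orthonormal_set S"
    and eig: "\<forall>x\<in>S. \<exists>l. A *v x = l *\<^sub>R x"
    using symmetric_orthonormal_eigenvectors[OF sym order_refl] by blast
  obtain u where u: "bij_betw u (UNIV::'p set) S"
    using finite_same_card_bij[of "UNIV::'p set" S] S(1,2) by auto
  then have uS: "u i \<in> S" for i by (auto simp: bij_betw_def)
  define l where "l i = (SOME c. A *v u i = c *\<^sub>R u i)" for i
  have eig_u: "A *v u i = l i *\<^sub>R u i" for i
    unfolding l_def using eig uS[of i] by (metis (mono_tags) someI)
  have "u i = u j \<longleftrightarrow> i = j" for i j using u by (auto simp: bij_betw_def inj_def)
  then have "u i \<bullet> u j = (if i = j then 1 else 0)" for i j
    using S(3) uS[of i] uS[of j] unfolding orthonormal_set_def by simp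
  moreover have "x = 0" if "\<forall>i. u i \<bullet> x = 0" for x
    using that u by (intro orthonormal_set_complete[OF S]) (auto simp: bij_betw_def inner_commute)
  ultimately have "onb u" unfolding onb_def by blast
  moreover have "A *v x = spec_mat u l *v x" for x
  proof -
    have "A *v x = A *v (\<Sum>i\<in>UNIV. (u i \<bullet> x) *\<^sub>R u i)"
      using onb_expansion[OF \<open>onb u\<close>, of x] by simp
    then show ?thesis
      by (simp add: spec_mat_mult_vec vec.sum matrix_vector_mult_scaleR eig_u mult.commute)
  qed
  then have "A = spec_mat u l" by (simp add: matrix_eq)
  ultimately show thesis by (rule that)
qed

section \<open>Density matrices and the matrix exponential\<close>

definition gibbs_state :: "real^'p^'p \<Rightarrow> real^'p^'p" where
  "gibbs_state A = (1 / trace (mexp A)) *\<^sub>R mexp A"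

lemma spec_mat_density:
  assumes "onb u" "\<And>i. 0 \<le> l i" "(\<Sum>i\<in>UNIV. l i) = 1"
  shows "spec_mat u l \<in> density_matrices"
  using assms by (auto simp: density_matrices_def transpose_spec_mat quad_spec_mat trace_spec_mat
      intro!: sum_nonneg)

lemma density_matrix_quad_bounds:
  assumes "\<rho> \<in> density_matrices"
  shows "0 \<le> z \<bullet> (\<rho> *v z)" and "z \<bullet> (\<rho> *v z) \<le> z \<bullet> z"
proof -
  have sym: "transpose \<rho> = \<rho>" and psd: "\<And>x. 0 \<le> x \<bullet> (\<rho> *v x)" and tr: "trace \<rho> = 1"
    using assms by (auto simp: density_matrices_def)
  show "0 \<le> z \<bullet> (\<rho> *v z)" by (rule psd)
  obtain u l where u: "onb u" and \<rho>: "\<rho> = spec_mat u l"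
    using symmetric_spectral_decomposition[OF sym] .
  have l: "0 \<le> l i" for i using psd[of "u i"] by (simp add: \<rho> spec_mat_eigenvalue[OF u])
  have "l i \<le> 1" for i
    using tr member_le_sum[of i UNIV l] l by (simp add: \<rho> trace_spec_mat[OF u])
  then have "(\<Sum>i\<in>UNIV. l i * (u i \<bullet> z)\<^sup>2) \<le> (\<Sum>i\<in>UNIV. (u i \<bullet> z)\<^sup>2)"
    by (intro sum_mono mult_left_le_one_le) (auto simp: l)
  then show "z \<bullet> (\<rho> *v z) \<le> z \<bullet> z"
    by (simp add: \<rho> quad_spec_mat onb_parseval[OF u])
qed

lemma trace_mexp_spec_mat: "onb u \<Longrightarrow> trace (mexp (spec_mat u l)) = (\<Sum>i\<in>UNIV. exp (l i))"
  by (simp add: mexp_spec_mat trace_spec_mat)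

lemma trace_mexp_pos:
  assumes "transpose A = A"
  shows "trace (mexp A) > 0"
proof -
  obtain u l where "onb u" "A = spec_mat u l"
    using symmetric_spectral_decomposition[OF assms] .
  then show ?thesis by (simp add: trace_mexp_spec_mat sum_pos)
qed

lemma gibbs_state_spec_mat:
  assumes "onb u"
  shows "gibbs_state (spec_mat u l) = spec_mat u (\<lambda>i. exp (l i) / (\<Sum>j\<in>UNIV. exp (l j)))"
  by (simp add: gibbs_state_def mexp_spec_mat[OF assms] trace_spec_mat[OF assms] scaleR_spec_mat)

lemma gibbs_state_density:
  assumes "transpose A = A"
  shows "gibbs_state A \<in> density_matrices"
proof -
  obtain u l where u: "onb u" and A: "A = spec_mat u l"
    using symmetric_spectral_decomposition[OF assms] .
  have "(\<Sum>j\<in>UNIV. exp (l j)) > 0" by (simp add: sum_pos)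
  then show ?thesis
    unfolding A gibbs_state_spec_mat[OF u]
    by (intro spec_mat_density[OF u]) (auto simp: sum_divide_distrib[symmetric])
qed

lemma mexp_zero: "mexp 0 = mat 1"
proof -
  have eq: "(\<lambda>k. (1 / fact k) *\<^sub>R matpow 0 k) = (\<lambda>k. if k = 0 then mat 1 else 0)"
    by (auto simp: fun_eq_iff gr0_conv_Suc)
  show ?thesis
    unfolding mexp_def eq using sums_single[of 0 "\<lambda>_. mat 1 :: real^'a^'a"] by (simp add: sums_iff)
qed

lemma exp_jensen:
  fixes p x :: "'i \<Rightarrow> real"
  assumes "finite I" "\<And>i. i \<in> I \<Longrightarrow> 0 \<le> p i" "(\<Sum>i\<in>I. p i) = 1"
  shows "exp (\<Sum>i\<in>I. p i * x i) \<le> (\<Sum>i\<in>I. p i * exp (x i))"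
proof -
  have "I \<noteq> {}" using assms(3) by auto
  then show ?thesis
    using convex_on_sum[OF assms(1) _ exp_convex assms(3), of x] assms(2) by simp
qed

text \<open>Peierls' inequality, from Jensen's inequality in an eigenbasis of the exponent.\<close>
lemma exp_quad_le_quad_mexp:
  assumes sym: "transpose B = B" and x: "x \<bullet> x = 1"
  shows "exp (x \<bullet> (B *v x)) \<le> x \<bullet> (mexp B *v x)"
proof -
  obtain v m where v: "onb v" and B: "B = spec_mat v m"
    using symmetric_spectral_decomposition[OF sym] .
  have "(\<Sum>j\<in>UNIV. (v j \<bullet> x)\<^sup>2) = 1" using onb_parseval[OF v, of x] x by simp
  then have "exp (\<Sum>j\<in>UNIV. (v j \<bullet> x)\<^sup>2 * m j) \<le> (\<Sum>j\<in>UNIV. (v j \<bullet> x)\<^sup>2 * exp (m j))"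
    by (intro exp_jensen) auto
  then show ?thesis
    by (simp add: B mexp_spec_mat[OF v] quad_spec_mat mult.commute)
qed

text \<open>Gibbs variational principle: \<open>ln tr e\<^sup>A\<close> is convex in \<open>A\<close> with gradient the Gibbs state.\<close>
theorem gibbs_variational:
  assumes symA: "transpose A = A" and symB: "transpose B = B"
  shows "ln (trace (mexp A)) + mat_inner (B - A) (gibbs_state A) \<le> ln (trace (mexp B))"
proof -
  obtain u a where u: "onb u" and A: "A = spec_mat u a"
    using symmetric_spectral_decomposition[OF symA] .
  define Z where "Z = (\<Sum>i\<in>UNIV. exp (a i))"
  define p where "p i = exp (a i) / Z" for i
  define b where "b i = u i \<bullet> (B *v u i)" for i
  have Z: "Z > 0" by (simp add: Z_def sum_pos)
  have p: "0 \<le> p i" "(\<Sum>i\<in>UNIV. p i) = 1" for i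
    using Z by (simp_all add: p_def Z_def sum_divide_distrib[symmetric])
  have "mat_inner (B - A) (gibbs_state A) = (\<Sum>i\<in>UNIV. p i * (b i - a i))"
    by (simp add: A gibbs_state_spec_mat[OF u] mat_inner_spec_mat matrix_vector_mult_diff_rdistrib
        inner_diff_right spec_mat_eigenvalue[OF u] b_def p_def Z_def)
  moreover have "exp (\<Sum>i\<in>UNIV. p i * (b i - a i)) \<le> trace (mexp B) / Z"
  proof -
    have "exp (\<Sum>i\<in>UNIV. p i * (b i - a i)) \<le> (\<Sum>i\<in>UNIV. p i * exp (b i - a i))"
      using p by (intro exp_jensen) auto
    also have "\<dots> = (\<Sum>i\<in>UNIV. exp (b i)) / Z"
      using Z by (simp add: p_def exp_diff sum_divide_distrib)
    also have "(\<Sum>i\<in>UNIV. exp (b i)) \<le> trace (mexp B)"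
      unfolding trace_eq_sum_onb[OF u, of "mexp B"] b_def
      by (intro sum_mono exp_quad_le_quad_mexp[OF symB]) (simp add: onb_inner[OF u])
    finally show ?thesis using Z by (simp add: divide_right_mono)
  qed
  moreover have "trace (mexp B) > 0" by (rule trace_mexp_pos[OF symB])
  ultimately have "mat_inner (B - A) (gibbs_state A) \<le> ln (trace (mexp B) / Z)"
    using Z by (simp add: ln_ge_iff)
  then have "mat_inner (B - A) (gibbs_state A) \<le> ln (trace (mexp B)) - ln Z"
    using Z \<open>trace (mexp B) > 0\<close> by (simp add: ln_div)
  moreover have "trace (mexp A) = Z" by (simp add: A Z_def trace_mexp_spec_mat[OF u])
  ultimately show ?thesis by simp
qed

text \<open>Regret of matrix multiplicative weights: \<open>ln tr exp\<close> is the potential.\<close>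
lemma ln_trace_mexp_sum_le:
  fixes M :: "nat \<Rightarrow> real^'p^'p"
  assumes sym: "\<And>t. transpose (M t) = M t"
  shows "ln (trace (mexp (eta *\<^sub>R (\<Sum>t=1..T. M t))))
    \<le> ln (real CARD('p)) + eta * (\<Sum>t=1..T. mat_inner (M t) (gibbs_state (eta *\<^sub>R (\<Sum>s=1..t. M s))))"
proof (induction T)
  case 0
  then show ?case by (simp add: mexp_zero trace_I)
next
  case (Suc T)
  define A where "A = eta *\<^sub>R (\<Sum>t=1..Suc T. M t)"
  define B where "B = eta *\<^sub>R (\<Sum>t=1..T. M t)"
  have "transpose A = A" "transpose B = B"
    unfolding A_def B_def transpose_scalar transpose_sum sym by simp_all
  then have "ln (trace (mexp A)) + mat_inner (B - A) (gibbs_state A) \<le> ln (trace (mexp B))"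
    by (rule gibbs_variational)
  moreover have "mat_inner (B - A) (gibbs_state A) = - eta * mat_inner (M (Suc T)) (gibbs_state A)"
    using mat_inner_scaleR_left[of "- eta"] by (simp add: A_def B_def algebra_simps)
  ultimately show ?case
    using Suc.IH by (simp add: A_def B_def distrib_left)
qed

lemma op_norm_spec_mat_le:
  assumes u: "onb u" and L: "\<And>i. \<bar>l i\<bar> \<le> L"
  shows "op_norm (spec_mat u l) \<le> L"
  unfolding op_norm_def
proof (rule onorm_le)
  fix x
  have "(norm (spec_mat u l *v x))\<^sup>2 = (\<Sum>i\<in>UNIV. (l i * (u i \<bullet> x))\<^sup>2)"
    unfolding spec_mat_mult_vec by (rule onb_norm_sum[OF u, of "\<lambda>i. l i * (u i \<bullet> x)"])
  also have "\<dots> \<le> (\<Sum>i\<in>UNIV. L\<^sup>2 * (u i \<bullet> x)\<^sup>2)"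
  proof (rule sum_mono)
    fix i
    have "(l i)\<^sup>2 \<le> L\<^sup>2" using power_mono[OF L[of i] abs_ge_zero, of 2] by simp
    then show "(l i * (u i \<bullet> x))\<^sup>2 \<le> L\<^sup>2 * (u i \<bullet> x)\<^sup>2"
      by (simp add: power_mult_distrib mult_right_mono)
  qed
  also have "\<dots> = L\<^sup>2 * (x \<bullet> x)"
    by (simp add: sum_distrib_left onb_parseval[OF u, of x])
  also have "\<dots> = (L * norm x)\<^sup>2"
    by (simp only: power_mult_distrib power2_norm_eq_inner)
  finally have sq: "(norm (spec_mat u l *v x))\<^sup>2 \<le> (L * norm x)\<^sup>2" .
  have "0 \<le> L" using L[of undefined] by simp
  then show "norm (spec_mat u l *v x) \<le> L * norm x"
    by (intro power2_le_imp_le[OF sq]) simp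
qed

lemma op_norm_le_ln_trace_mexp:
  assumes sym: "transpose A = A" and psd: "\<And>x. 0 \<le> x \<bullet> (A *v x)" and eta: "eta > 0"
  shows "op_norm A \<le> ln (trace (mexp (eta *\<^sub>R A))) / eta"
proof -
  obtain u l where u: "onb u" and A: "A = spec_mat u l"
    using symmetric_spectral_decomposition[OF sym] .
  have Z: "trace (mexp (eta *\<^sub>R A)) = (\<Sum>j\<in>UNIV. exp (eta * l j))"
    by (simp add: A scaleR_spec_mat trace_mexp_spec_mat[OF u])
  have "\<bar>l i\<bar> \<le> ln (trace (mexp (eta *\<^sub>R A))) / eta" for i
  proof -
    have "0 \<le> l i" using psd[of "u i"] by (simp add: A spec_mat_eigenvalue[OF u])
    have "exp (eta * l i) \<le> trace (mexp (eta *\<^sub>R A))"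
      unfolding Z by (rule member_le_sum) auto
    then have "eta * l i \<le> ln (trace (mexp (eta *\<^sub>R A)))"
      by (simp add: Z sum_pos ln_ge_iff)
    with \<open>0 \<le> l i\<close> show ?thesis
      using eta by (simp add: field_simps)
  qed
  then show ?thesis
    unfolding A by (rule op_norm_spec_mat_le[OF u])
qed

section \<open>Relative entropy projection onto the capped simplex\<close>

lemma capped_simplexD:
  assumes "w \<in> capped_simplex eps"
  shows "0 \<le> w n" and "(\<Sum>n\<in>UNIV. w n) = 1"
  using assms by (auto simp: capped_simplex_def)

lemma uniform_in_capped_simplex:
  assumes "0 \<le> eps" "eps < 1"
  shows "(\<lambda>n::'n::finite. 1 / real CARD('n)) \<in> capped_simplex eps"
proof -
  have "(1 - eps) * real CARD('n) \<le> real CARD('n)"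
    using assms by (simp add: mult_left_le_one_le)
  then have "1 / real CARD('n) \<le> 1 / ((1 - eps) * real CARD('n))"
    using assms by (intro divide_left_mono) auto
  then show ?thesis by (auto simp: capped_simplex_def)
qed

lemma capped_simplex_segment:
  assumes u: "u \<in> capped_simplex eps" and v: "v \<in> capped_simplex eps" and s: "0 \<le> s" "s \<le> 1"
  shows "(\<lambda>n. v n + s * (u n - v n)) \<in> capped_simplex eps"
proof -
  have eq: "v n + s * (u n - v n) = (1 - s) * v n + s * u n" for n
    by (simp add: algebra_simps)
  have "(\<Sum>n\<in>UNIV. (1 - s) * v n + s * u n) = 1"
    using u v by (simp add: sum.distrib sum_distrib_left[symmetric] capped_simplexD)
  moreover have "0 \<le> (1 - s) * v n + s * u n" for n
    using u v s by (simp add: capped_simplexD)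
  moreover have "(1 - s) * v n + s * u n \<le> 1 / ((1 - eps) * real CARD('a))" for n
    using u v s by (intro convex_bound_le) (auto simp: capped_simplex_def)
  ultimately show ?thesis by (simp add: capped_simplex_def eq)
qed

definition rel_ent_proj :: "real \<Rightarrow> ('n::finite \<Rightarrow> real) \<Rightarrow> ('n \<Rightarrow> real) \<Rightarrow> bool" where
  "rel_ent_proj eps c w \<longleftrightarrow>
     w \<in> capped_simplex eps \<and> (\<forall>v\<in>capped_simplex eps. rel_ent w c \<le> rel_ent v c)"

text \<open>Up to the factor \<open>s\<close>, an upper bound for the increase of \<open>RE(\<cdot> \<parallel> c)\<close> from \<open>w\<close> to
  \<open>w + s (u - w)\<close>; it tends to the directional derivative as \<open>s \<rightarrow> 0\<close>.\<close>
definition rel_ent_slope :: "('n::finite \<Rightarrow> real) \<Rightarrow> ('n \<Rightarrow> real) \<Rightarrow> ('n \<Rightarrow> real) \<Rightarrow> real \<Rightarrow> real" where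
  "rel_ent_slope c w u s = (\<Sum>n\<in>UNIV. (u n - w n) * ln ((w n + s * (u n - w n)) / c n))"

lemma xlnx_tangent_le:
  fixes a b c :: real
  assumes "a > 0" "b \<ge> 0" "c > 0"
  shows "a * ln (a / c) - b * ln (b / c) \<le> (a - b) * (ln (a / c) + 1)"
proof (cases "b = 0")
  case False
  with assms have "b * ln (a / b) \<le> a - b"
    using ln_le_minus_one[of "a / b"] by (simp add: field_simps)
  moreover have "ln (a / b) = ln (a / c) - ln (b / c)" using assms False by (simp add: ln_div)
  ultimately show ?thesis by (simp add: algebra_simps)
qed (use assms in simp)

lemma rel_ent_ge_sum_diff:
  assumes "\<And>n. 0 \<le> x n" "\<And>n. 0 < c n"
  shows "(\<Sum>n\<in>UNIV. x n - c n) \<le> rel_ent x c"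
  unfolding rel_ent_def
proof (rule sum_mono)
  fix n
  show "x n - c n \<le> x n * ln (x n / c n)"
  proof (cases "x n = 0")
    case False
    with assms have "x n > 0" by (simp add: order_less_le)
    then have "x n * ln (c n / x n) \<le> c n - x n"
      using ln_le_minus_one[of "c n / x n"] assms(2)[of n] by (simp add: field_simps)
    then show ?thesis
      using \<open>x n > 0\<close> assms(2)[of n] by (simp add: ln_div algebra_simps)
  qed (use assms(2)[of n] in simp)
qed

lemma rel_ent_proj_slope_nonneg:
  assumes proj: "rel_ent_proj eps c w" and u: "u \<in> capped_simplex eps"
    and c: "\<And>n. 0 < c n" and s: "0 < s" "s \<le> 1"
    and pos: "\<And>n. 0 < w n + s * (u n - w n)"
  shows "0 \<le> rel_ent_slope c w u s"
proof -
  define x where "x n = w n + s * (u n - w n)" for n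
  have w: "w \<in> capped_simplex eps" using proj by (simp add: rel_ent_proj_def)
  have "x \<in> capped_simplex eps"
    unfolding x_def using capped_simplex_segment[OF u w] s by simp
  then have "0 \<le> rel_ent x c - rel_ent w c" using proj by (simp add: rel_ent_proj_def)
  also have "\<dots> \<le> (\<Sum>n\<in>UNIV. (x n - w n) * (ln (x n / c n) + 1))"
    unfolding rel_ent_def sum_subtractf[symmetric]
    using pos c w by (intro sum_mono xlnx_tangent_le) (auto simp: x_def capped_simplexD)
  also have "\<dots> = s * rel_ent_slope c w u s + s * ((\<Sum>n\<in>UNIV. u n) - (\<Sum>n\<in>UNIV. w n))"
    by (simp add: x_def rel_ent_slope_def sum.distrib sum_distrib_left sum_subtractf algebra_simps)
  also have "\<dots> = s * rel_ent_slope c w u s"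
    using u w by (simp add: capped_simplexD)
  finally show ?thesis using s by (simp add: zero_le_mult_iff)
qed

lemma rel_ent_proj_slope_eventually_nonneg:
  assumes proj: "rel_ent_proj eps c w" and u: "u \<in> capped_simplex eps"
    and c: "\<And>n. 0 < c n" and wu: "\<And>n. 0 < w n \<or> 0 < u n"
  shows "\<forall>\<^sub>F s in at_right 0. 0 \<le> rel_ent_slope c w u s"
proof -
  have w: "w \<in> capped_simplex eps" using proj by (simp add: rel_ent_proj_def)
  have "\<forall>\<^sub>F s in at_right 0. s \<in> {0<..<1::real}"
    by (rule eventually_at_right_real) simp
  then show ?thesis
  proof eventually_elim
    case (elim s)
    have "0 < w n + s * (u n - w n)" for n
    proof -
      have "w n + s * (u n - w n) = (1 - s) * w n + s * u n" by (simp add: algebra_simps)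
      then show ?thesis
        using elim wu[of n] capped_simplexD(1)[OF w, of n] capped_simplexD(1)[OF u, of n]
        by (auto intro: add_pos_nonneg add_nonneg_pos)
    qed
    then show ?case using elim by (intro rel_ent_proj_slope_nonneg[OF proj u c]) auto
  qed
qed

text \<open>The coordinates with \<open>w k = 0\<close> contribute \<open>u k ln s\<close>; all others converge.\<close>
lemma rel_ent_slope_at_bot:
  assumes w: "\<And>k. 0 \<le> w k" "w n = 0" and u: "\<And>k. 0 < u k" and c: "\<And>k. 0 < c k"
  shows "filterlim (rel_ent_slope c w u) at_bot (at_right 0)"
proof -
  define g where "g k s = (if w k = 0 then u k * ln (u k / c k)
      else (u k - w k) * ln ((w k + s * (u k - w k)) / c k))" for k s
  define K where "K = (\<Sum>k\<in>UNIV. if w k = 0 then u k else 0)"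
  have "u n \<le> K"
    unfolding K_def using member_le_sum[of n UNIV "\<lambda>k. if w k = 0 then u k else 0"] w u
    by (simp add: less_imp_le)
  then have K: "0 < K" using u[of n] by linarith
  have "(g k \<longlongrightarrow> g k 0) (at_right 0)" for k
  proof (cases "w k = 0")
    case False
    with w(1)[of k] c[of k] have "0 < w k" "c k \<noteq> 0" by (simp_all add: order_less_le)
    then have "((\<lambda>s. (u k - w k) * ln ((w k + s * (u k - w k)) / c k))
        \<longlongrightarrow> (u k - w k) * ln ((w k + 0 * (u k - w k)) / c k)) (at_right 0)"
      by (intro tendsto_intros tendsto_ln) auto
    with False show ?thesis by (simp add: g_def[abs_def])
  qed (simp add: g_def[abs_def])
  then have "((\<lambda>s. \<Sum>k\<in>UNIV. g k s) \<longlongrightarrow> (\<Sum>k\<in>UNIV. g k 0)) (at_right 0)"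
    by (intro tendsto_sum)
  then have "filterlim (\<lambda>s. (\<Sum>k\<in>UNIV. g k s) + K * ln s) at_bot (at_right 0)"
    by (subst filterlim_tendsto_add_at_bot_iff)
      (auto intro: filterlim_tendsto_pos_mult_at_bot[OF tendsto_const K ln_at_0])
  moreover have "\<forall>\<^sub>F s in at_right 0. rel_ent_slope c w u s = (\<Sum>k\<in>UNIV. g k s) + K * ln s"
  proof (rule eventually_at_rightI[of 0 1])
    fix s :: real assume "s \<in> {0<..<1}"
    then have "(u k - w k) * ln ((w k + s * (u k - w k)) / c k)
        = g k s + (if w k = 0 then u k else 0) * ln s" for k
      using u[of k] c[of k] by (auto simp: g_def ln_mult ln_div algebra_simps)
    then show "rel_ent_slope c w u s = (\<Sum>k\<in>UNIV. g k s) + K * ln s"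
      unfolding rel_ent_slope_def K_def sum_distrib_right sum.distrib[symmetric]
      by (rule sum.cong[OF refl])
  qed simp
  ultimately show ?thesis
    by (subst filterlim_cong[OF refl refl]) auto
qed

lemma rel_ent_proj_pos:
  fixes w c :: "'n::finite \<Rightarrow> real"
  assumes eps: "0 \<le> eps" "eps < 1" and c: "\<And>n. 0 < c n" and proj: "rel_ent_proj eps c w"
  shows "0 < w n"
proof (rule ccontr)
  define u0 where "u0 = (\<lambda>_::'n. 1 / real CARD('n))"
  have u0: "u0 \<in> capped_simplex eps" "\<And>k. 0 < u0 k"
    unfolding u0_def using uniform_in_capped_simplex[OF eps] by auto
  assume "\<not> 0 < w n"
  moreover have w: "\<And>k. 0 \<le> w k" using proj by (meson capped_simplexD(1) rel_ent_proj_def)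
  ultimately have "w n = 0" by (simp add: order_less_le)
  then have "filterlim (rel_ent_slope c w u0) at_bot (at_right 0)"
    by (rule rel_ent_slope_at_bot[OF w _ u0(2) c])
  then have "\<forall>\<^sub>F s in at_right 0. rel_ent_slope c w u0 s < 0"
    by (simp add: filterlim_at_bot_dense)
  moreover have "\<forall>\<^sub>F s in at_right 0. 0 \<le> rel_ent_slope c w u0 s"
    using u0 by (intro rel_ent_proj_slope_eventually_nonneg[OF proj u0(1) c]) auto
  ultimately have "\<forall>\<^sub>F s in at_right (0::real). False"
    by eventually_elim simp
  then show False by (simp add: trivial_limit_at_right_real)
qed

lemma rel_ent_proj_pythagoras:
  fixes w c :: "'n::finite \<Rightarrow> real"
  assumes eps: "0 \<le> eps" "eps < 1" and c: "\<And>n. 0 < c n" and proj: "rel_ent_proj eps c w"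
    and u: "u \<in> capped_simplex eps"
  shows "rel_ent u w + rel_ent w c \<le> rel_ent u c"
proof -
  have w: "0 < w n" for n by (rule rel_ent_proj_pos[OF eps c proj])
  have "w n \<noteq> 0" "c n \<noteq> 0" for n using w[of n] c[of n] by simp_all
  then have "(rel_ent_slope c w u \<longlongrightarrow> (\<Sum>n\<in>UNIV. (u n - w n) * ln (w n / c n))) (at_right 0)"
    unfolding rel_ent_slope_def using w c
    by (intro tendsto_eq_intros refl) (auto intro!: tendsto_ln)
  moreover have "\<forall>\<^sub>F s in at_right 0. 0 \<le> rel_ent_slope c w u s"
    using w by (intro rel_ent_proj_slope_eventually_nonneg[OF proj u c]) auto
  ultimately have "0 \<le> (\<Sum>n\<in>UNIV. (u n - w n) * ln (w n / c n))"
    by (rule tendsto_lowerbound) (simp add: trivial_limit_at_right_real)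
  moreover have "u n * ln (u n / c n) = u n * ln (u n / w n) + w n * ln (w n / c n)
      + (u n - w n) * ln (w n / c n)" for n
  proof (cases "u n = 0")
    case False
    then have "u n > 0" using capped_simplexD(1)[OF u, of n] by simp
    then show ?thesis using w[of n] c[of n] by (simp add: ln_div algebra_simps)
  qed (simp add: algebra_simps)
  then have "rel_ent u c = rel_ent u w + rel_ent w c + (\<Sum>n\<in>UNIV. (u n - w n) * ln (w n / c n))"
    by (simp add: rel_ent_def sum.distrib)
  ultimately show ?thesis by linarith
qed

lemma rel_ent_nonneg:
  assumes "u \<in> capped_simplex eps" "w \<in> capped_simplex eps" "\<And>n. 0 < w n"
  shows "0 \<le> rel_ent u w"
  using rel_ent_ge_sum_diff[of u w] assms by (simp add: capped_simplexD sum_subtractf)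

lemma rel_ent_uniform_le:
  assumes eps: "0 \<le> eps" "eps < 1" and u: "u \<in> capped_simplex eps"
  shows "rel_ent u (\<lambda>n::'n::finite. 1 / real CARD('n)) \<le> ln (1 / (1 - eps))"
proof -
  have "u n * ln (u n / (1 / real CARD('n))) \<le> u n * ln (1 / (1 - eps))" for n
  proof (cases "u n = 0")
    case False
    then have "u n > 0" using capped_simplexD(1)[OF u, of n] by simp
    moreover have "u n * real CARD('n) \<le> 1 / (1 - eps)"
      using u eps by (simp add: capped_simplex_def field_simps)
    ultimately have "ln (u n * real CARD('n)) \<le> ln (1 / (1 - eps))" by (intro ln_mono) auto
    with \<open>u n > 0\<close> show ?thesis by (simp add: mult_left_mono)
  qed simp
  then have "rel_ent u (\<lambda>n::'n. 1 / real CARD('n)) \<le> (\<Sum>n\<in>UNIV. u n * ln (1 / (1 - eps)))"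
    unfolding rel_ent_def by (rule sum_mono)
  also have "\<dots> = ln (1 / (1 - eps))"
    using capped_simplexD(2)[OF u] by (simp add: sum_distrib_right[symmetric])
  finally show ?thesis .
qed

section \<open>Multiplicative weights over the capped simplex\<close>

lemma neg_ln_one_minus_le:
  fixes x :: real
  assumes "0 \<le> x" "x \<le> 1/2"
  shows "- ln (1 - x) \<le> x + x\<^sup>2"
proof -
  define f where "f y = y + y\<^sup>2 + ln (1 - y)" for y :: real
  have "f 0 \<le> f x"
  proof (rule deriv_nonneg_imp_mono[of 0 x f "\<lambda>y. 1 + 2 * y - 1 / (1 - y)"])
    fix y assume y: "y \<in> {0..x}"
    with assms have "y < 1" by auto
    then show "(f has_real_derivative 1 + 2 * y - 1 / (1 - y)) (at y)"
      unfolding f_def by (auto intro!: derivative_eq_intros simp: field_simps power2_eq_square)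
    have "1 + 2 * y - 1 / (1 - y) = y * (1 - 2 * y) / (1 - y)"
      using \<open>y < 1\<close> by (simp add: field_simps)
    then show "0 \<le> 1 + 2 * y - 1 / (1 - y)"
      using y assms \<open>y < 1\<close> by simp
  qed (use assms in auto)
  then show ?thesis by (simp add: f_def)
qed

definition mw_run :: "real \<Rightarrow> real \<Rightarrow> (nat \<Rightarrow> 'n::finite \<Rightarrow> real) \<Rightarrow> nat \<Rightarrow> (nat \<Rightarrow> 'n \<Rightarrow> real) \<Rightarrow> bool" where
  "mw_run eps eta m T w \<longleftrightarrow> w 1 = (\<lambda>n. 1 / real CARD('n)) \<and>
     (\<forall>t\<in>{1..T}. rel_ent_proj eps (\<lambda>n. w t n * (1 - eta * m t n)) (w (Suc t)))"

lemma rel_ent_shrink_le: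
  assumes u: "\<And>n. 0 \<le> u n" and w: "\<And>n. 0 < w n"
    and x: "\<And>n. 0 \<le> x n" "\<And>n. x n \<le> a" "a \<le> 1/2"
  shows "rel_ent u (\<lambda>n. w n * (1 - x n)) \<le> rel_ent u w + (1 + a) * (\<Sum>n\<in>UNIV. u n * x n)"
proof -
  have "u n * ln (u n / (w n * (1 - x n))) \<le> u n * ln (u n / w n) + (1 + a) * (u n * x n)" for n
  proof (cases "u n = 0")
    case False
    with u[of n] have "0 < u n" by simp
    have "- ln (1 - x n) \<le> x n + (x n)\<^sup>2"
      using x(1,2)[of n] x(3) by (intro neg_ln_one_minus_le) auto
    also have "\<dots> \<le> (1 + a) * x n"
      using mult_left_mono[OF x(2)[of n] x(1)[of n]] by (simp add: power2_eq_square algebra_simps)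
    finally have "ln (u n / (w n * (1 - x n))) \<le> ln (u n / w n) + (1 + a) * x n"
      using \<open>0 < u n\<close> w[of n] x(2)[of n] x(3) by (simp add: ln_div ln_mult)
    from mult_left_mono[OF this, of "u n"] \<open>0 < u n\<close> show ?thesis
      by (simp add: algebra_simps)
  qed simp
  then have "rel_ent u (\<lambda>n. w n * (1 - x n))
      \<le> (\<Sum>n\<in>UNIV. u n * ln (u n / w n) + (1 + a) * (u n * x n))"
    unfolding rel_ent_def by (rule sum_mono)
  then show ?thesis by (simp add: rel_ent_def sum.distrib sum_distrib_left)
qed

lemma mw_step_regret:
  fixes w w' u m :: "'n::finite \<Rightarrow> real"
  assumes eps: "0 \<le> eps" "eps < 1"
    and w: "w \<in> capped_simplex eps" "\<And>n. 0 < w n"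
    and m: "\<And>n. 0 \<le> m n" "\<And>n. m n \<le> B" and eta: "0 < eta" "eta * B \<le> 1/2"
    and proj: "rel_ent_proj eps (\<lambda>n. w n * (1 - eta * m n)) w'"
    and u: "u \<in> capped_simplex eps"
  shows "rel_ent u w'
    \<le> rel_ent u w + eta * (1 + eta * B) * (\<Sum>n\<in>UNIV. u n * m n) - eta * (\<Sum>n\<in>UNIV. w n * m n)"
proof -
  define c where "c n = w n * (1 - eta * m n)" for n
  have em: "0 \<le> eta * m n" "eta * m n \<le> eta * B" for n
    using m[of n] eta by (simp_all add: mult_left_mono)
  have "0 < 1 - eta * m n" for n using em(2)[of n] eta(2) by linarith
  then have c: "0 < c n" for n using w(2)[of n] by (simp add: c_def)
  have w': "w' \<in> capped_simplex eps" using proj by (simp add: rel_ent_proj_def)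
  have "rel_ent u w' + rel_ent w' c \<le> rel_ent u c"
    using rel_ent_proj_pythagoras[OF eps c _ u] proj by (simp add: c_def[abs_def])
  moreover have "(\<Sum>n\<in>UNIV. w' n - c n) \<le> rel_ent w' c"
    using w' c by (intro rel_ent_ge_sum_diff) (auto simp: capped_simplexD)
  moreover have "(\<Sum>n\<in>UNIV. w' n - c n) = eta * (\<Sum>n\<in>UNIV. w n * m n)"
    using w(1) w' by (simp add: c_def sum_subtractf sum_distrib_left algebra_simps
        sum.distrib capped_simplexD)
  moreover have "rel_ent u c \<le> rel_ent u w + (1 + eta * B) * (\<Sum>n\<in>UNIV. u n * (eta * m n))"
    unfolding c_def[abs_def] using u w(2) em eta(2)
    by (intro rel_ent_shrink_le) (auto simp: capped_simplexD)
  ultimately show ?thesis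
    by (simp add: sum_distrib_left algebra_simps)
qed

lemma mw_run_weights:
  assumes eps: "0 \<le> eps" "eps < 1" and run: "mw_run eps eta m T w"
    and m: "\<And>t n. m t n \<le> B" and eta: "0 < eta" "eta * B \<le> 1/2"
    and t: "1 \<le> t" "t \<le> Suc T"
  shows "w t \<in> capped_simplex eps \<and> (\<forall>n. 0 < w t n)"
  using t
proof (induction t)
  case (Suc t)
  show ?case
  proof (cases "t = 0")
    case True
    then show ?thesis using run uniform_in_capped_simplex[OF eps] by (simp add: mw_run_def)
  next
    case False
    with Suc have IH: "0 < w t n" for n by auto
    have proj: "rel_ent_proj eps (\<lambda>n. w t n * (1 - eta * m t n)) (w (Suc t))"
      using run False Suc.prems by (simp add: mw_run_def)
    have "0 < 1 - eta * m t n" for n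
      using mult_left_mono[OF m[of t n], of eta] eta by linarith
    then have "0 < w t n * (1 - eta * m t n)" for n
      using IH[of n] by simp
    then show ?thesis
      using proj rel_ent_proj_pos[OF eps _ proj] by (simp add: rel_ent_proj_def)
  qed
qed simp

theorem mw_regret:
  assumes eps: "0 \<le> eps" "eps < 1" and run: "mw_run eps eta m T w"
    and m: "\<And>t n. 0 \<le> m t n" "\<And>t n. m t n \<le> B" and eta: "0 < eta" "eta * B \<le> 1/2"
    and u: "u \<in> capped_simplex eps"
  shows "eta * (\<Sum>t=1..T. \<Sum>n\<in>UNIV. w t n * m t n)
    \<le> ln (1 / (1 - eps)) + eta * (1 + eta * B) * (\<Sum>t=1..T. \<Sum>n\<in>UNIV. u n * m t n)"
proof -
  note weights = mw_run_weights[OF eps run m(2) eta]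
  have "rel_ent u (w (Suc t)) - rel_ent u (w t)
      \<le> eta * (1 + eta * B) * (\<Sum>n\<in>UNIV. u n * m t n) - eta * (\<Sum>n\<in>UNIV. w t n * m t n)"
    if "t \<in> {1..T}" for t
    using mw_step_regret[OF eps _ _ _ _ eta _ u, where w = "w t" and m = "m t" and w' = "w (Suc t)"]
      m weights[of t] run that by (auto simp: mw_run_def)
  then have "(\<Sum>t=1..T. rel_ent u (w (Suc t)) - rel_ent u (w t))
      \<le> (\<Sum>t=1..T. eta * (1 + eta * B) * (\<Sum>n\<in>UNIV. u n * m t n) - eta * (\<Sum>n\<in>UNIV. w t n * m t n))"
    by (rule sum_mono)
  moreover have "(\<Sum>t=1..T. rel_ent u (w (Suc t)) - rel_ent u (w t))
      = rel_ent u (w (Suc T)) - rel_ent u (w 1)"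
    by (rule sum_Suc_diff) simp
  moreover have "0 \<le> rel_ent u (w (Suc T))"
    using weights[of "Suc T"] u by (auto intro: rel_ent_nonneg)
  moreover have "rel_ent u (w 1) \<le> ln (1 / (1 - eps))"
    using run rel_ent_uniform_le[OF eps u] by (simp add: mw_run_def)
  ultimately show ?thesis
    by (simp add: sum_subtractf sum_distrib_left)
qed

section \<open>The MW-MMW rounds\<close>

lemma dist_sq_le_nu: "(norm (g i - g j))\<^sup>2 \<le> nu g"
proof -
  have "{(norm (g i - g j))\<^sup>2 | i j. True} = (\<lambda>(i, j). (norm (g i - g j))\<^sup>2) ` UNIV"
    by auto
  then have "finite {(norm (g i - g j))\<^sup>2 | i j. True}" by simp
  then show ?thesis
    unfolding nu_def by (rule Max_ge) blast
qed

lemma nu_nonneg: "0 \<le> nu g"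
  using dist_sq_le_nu[of g undefined undefined] by simp

lemma norm_sq_le_nu:
  assumes mu: "mu \<in> convex hull (range g)"
  shows "(g n - mu) \<bullet> (g n - mu) \<le> nu g"
proof -
  have "range g \<subseteq> cball (g n) (sqrt (nu g))"
    using dist_sq_le_nu[of g n] by (auto simp: dist_norm real_le_rsqrt)
  then have "convex hull (range g) \<subseteq> cball (g n) (sqrt (nu g))"
    by (intro hull_minimal convex_cball)
  with mu have "norm (g n - mu) \<le> sqrt (nu g)" by (auto simp: dist_norm)
  then have "(norm (g n - mu))\<^sup>2 \<le> nu g"
    using nu_nonneg by (metis norm_ge_zero power_mono real_sqrt_pow2)
  then show ?thesis by (simp add: power2_norm_eq_inner)
qed

lemma transpose_Smat: "transpose (Smat g mu v) = Smat g mu v"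
  unfolding Smat_def transpose_sum transpose_scalar transpose_outer ..

lemma mat_inner_Smat:
  "mat_inner (Smat g mu v) X = (\<Sum>n\<in>UNIV. v n * ((g n - mu) \<bullet> (X *v (g n - mu))))"
  unfolding Smat_def mat_inner_sum_left mat_inner_scaleR_left mat_inner_commute[of "outer _ _"]
    mat_inner_outer ..

lemma quad_Smat: "x \<bullet> (Smat g mu v *v x) = (\<Sum>n\<in>UNIV. v n * ((g n - mu) \<bullet> x)\<^sup>2)"
  unfolding mat_inner_outer[symmetric] mat_inner_Smat outer_mult_vec
  by (simp add: power2_eq_square inner_commute)

lemma rho_round_eq_gibbs_state:
  "rho_round g mu eta w t = gibbs_state (eta *\<^sub>R (\<Sum>s=1..t. S_round g mu w s))"
  unfolding rho_round_def gibbs_state_def Let_def ..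

lemma rho_round_density: "rho_round g mu eta w t \<in> density_matrices"
  unfolding rho_round_eq_gibbs_state
  by (intro gibbs_state_density) (simp add: transpose_scalar transpose_sum S_round_def transpose_Smat)

lemma m_round_bounds:
  assumes "mu \<in> convex hull (range g)"
  shows "0 \<le> m_round g mu eta w t n" and "m_round g mu eta w t n \<le> nu g"
  using density_matrix_quad_bounds[OF rho_round_density[of g mu eta w t], of "g n - mu"]
    norm_sq_le_nu[OF assms, of n]
  by (auto simp: m_round_def)

lemma mw_mmw_run_iff_mw_run:
  "mw_mmw_run eps g mu eta_w eta_rho T w \<longleftrightarrow> mw_run eps eta_w (m_round g mu eta_rho w) T w"
  unfolding mw_mmw_run_def mw_run_def rel_ent_proj_def wtilde_round_def ..

lemma S_bar_eq_Smat_w_bar: "S_bar g mu T w = Smat g mu (w_bar T w)"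
proof -
  have "S_bar g mu T w = (\<Sum>t=1..T. \<Sum>n\<in>UNIV. (1 / real T * w t n) *\<^sub>R outer (g n - mu) (g n - mu))"
    by (simp add: S_bar_def S_round_def Smat_def scaleR_sum_right)
  also have "\<dots> = Smat g mu (w_bar T w)"
    by (subst sum.swap) (simp add: Smat_def w_bar_def scaleR_sum_left sum_distrib_left)
  finally show ?thesis .
qed

lemma density_matrices_nonempty: "density_matrices \<noteq> {}"
proof -
  have "transpose (0 :: real^'p^'p) = 0" by (simp add: transpose_def vec_eq_iff)
  then show ?thesis using gibbs_state_density by blast
qed

lemma mat_inner_Smat_bounds:
  assumes u: "\<And>n. 0 \<le> u n" and \<rho>: "\<rho> \<in> density_matrices"
  shows "0 \<le> mat_inner (Smat g mu u) \<rho>"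
    and "mat_inner (Smat g mu u) \<rho> \<le> (\<Sum>n\<in>UNIV. u n * ((g n - mu) \<bullet> (g n - mu)))"
  using density_matrix_quad_bounds[OF \<rho>] u
  by (auto simp: mat_inner_Smat intro!: sum_nonneg sum_mono mult_left_mono)

lemma mat_inner_Smat_le_SUP:
  assumes "\<And>n. 0 \<le> u n" "\<rho> \<in> density_matrices"
  shows "mat_inner (Smat g mu u) \<rho> \<le> (SUP \<rho>\<in>density_matrices. mat_inner (Smat g mu u) \<rho>)"
  using assms mat_inner_Smat_bounds(2)[OF assms(1)]
  by (intro cSUP_upper bdd_aboveI2) auto

lemma SUP_mat_inner_Smat_nonneg:
  fixes g :: "'n::finite \<Rightarrow> real^'p::finite"
  assumes "\<And>n. 0 \<le> u n"
  shows "0 \<le> (SUP \<rho>\<in>density_matrices. mat_inner (Smat g mu u) \<rho>)"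
proof -
  obtain \<rho> :: "real^'p^'p" where "\<rho> \<in> density_matrices" using density_matrices_nonempty by blast
  then show ?thesis
    using mat_inner_Smat_bounds(1)[of u, OF assms] mat_inner_Smat_le_SUP[of u, OF assms]
    by (meson order_trans)
qed

lemma le_OPT:
  assumes eps: "0 \<le> eps" "eps < 1"
    and "\<And>u. u \<in> capped_simplex eps \<Longrightarrow> x \<le> (SUP \<rho>\<in>density_matrices. mat_inner (Smat g mu u) \<rho>)"
  shows "x \<le> OPT eps g mu"
  unfolding OPT_def using uniform_in_capped_simplex[OF eps] assms(3)
  by (intro cINF_greatest) auto

lemma OPT_nonneg: "0 \<le> eps \<Longrightarrow> eps < 1 \<Longrightarrow> 0 \<le> OPT eps g mu"
  by (rule le_OPT) (auto intro: SUP_mat_inner_Smat_nonneg simp: capped_simplexD)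

lemma OPT_le_nu:
  fixes g :: "'n::finite \<Rightarrow> real^'p::finite"
  assumes eps: "0 \<le> eps" "eps < 1" and mu: "mu \<in> convex hull (range g)"
  shows "OPT eps g mu \<le> nu g"
proof -
  define u0 where "u0 = (\<lambda>n::'n. 1 / real CARD('n))"
  have u0: "u0 \<in> capped_simplex eps"
    unfolding u0_def by (rule uniform_in_capped_simplex[OF eps])
  have "OPT eps g mu \<le> (SUP \<rho>\<in>density_matrices. mat_inner (Smat g mu u0) \<rho>)"
    unfolding OPT_def using u0
    by (intro cINF_lower bdd_belowI2[where m = 0] SUP_mat_inner_Smat_nonneg)
      (auto simp: capped_simplexD)
  also have "\<dots> \<le> nu g"
  proof (rule cSUP_least[OF density_matrices_nonempty])
    fix \<rho> :: "real^'p^'p" assume "\<rho> \<in> density_matrices"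
    then have "mat_inner (Smat g mu u0) \<rho> \<le> (\<Sum>n\<in>UNIV. u0 n * ((g n - mu) \<bullet> (g n - mu)))"
      by (intro mat_inner_Smat_bounds(2)) (simp add: u0_def)
    also have "\<dots> \<le> (\<Sum>n\<in>UNIV. u0 n * nu g)"
      using norm_sq_le_nu[OF mu] by (intro sum_mono mult_left_mono) (auto simp: u0_def)
    also have "\<dots> = nu g"
      by (simp add: u0_def sum_distrib_right[symmetric])
    finally show "mat_inner (Smat g mu u0) \<rho> \<le> nu g" .
  qed
  finally show ?thesis .
qed

lemma sum_m_round_le_SUP:
  assumes "\<And>n. 0 \<le> u n"
  shows "(\<Sum>t=1..T. \<Sum>n\<in>UNIV. u n * m_round g mu eta w t n)
    \<le> real T * (SUP \<rho>\<in>density_matrices. mat_inner (Smat g mu u) \<rho>)"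
proof -
  have "(\<Sum>n\<in>UNIV. u n * m_round g mu eta w t n) = mat_inner (Smat g mu u) (rho_round g mu eta w t)"
    for t by (simp add: mat_inner_Smat m_round_def)
  moreover have "mat_inner (Smat g mu u) (rho_round g mu eta w t)
      \<le> (SUP \<rho>\<in>density_matrices. mat_inner (Smat g mu u) \<rho>)" for t
    using assms by (intro mat_inner_Smat_le_SUP rho_round_density)
  ultimately have "(\<Sum>t=1..T. \<Sum>n\<in>UNIV. u n * m_round g mu eta w t n)
      \<le> (\<Sum>t=1..T. SUP \<rho>\<in>density_matrices. mat_inner (Smat g mu u) \<rho>)"
    by (intro sum_mono) simp
  then show ?thesis by simp
qed

lemma op_norm_S_bar_le_avg_loss:
  fixes g :: "'n::finite \<Rightarrow> real^'p::finite"
  assumes T: "1 \<le> T" and eta: "0 < eta" and w: "\<And>t n. t \<in> {1..T} \<Longrightarrow> 0 \<le> w t n"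
  shows "op_norm (S_bar g mu T w)
    \<le> ln (real CARD('p)) / (real T * eta) + (\<Sum>t=1..T. \<Sum>n\<in>UNIV. w t n * m_round g mu eta w t n) / real T"
proof -
  let ?A = "\<Sum>t=1..T. S_round g mu w t"
  have "0 \<le> x \<bullet> (S_bar g mu T w *v x)" for x
    using w unfolding S_bar_eq_Smat_w_bar quad_Smat w_bar_def
    by (intro sum_nonneg mult_nonneg_nonneg) auto
  then have "op_norm (S_bar g mu T w) \<le> ln (trace (mexp ((eta * real T) *\<^sub>R S_bar g mu T w))) / (eta * real T)"
    using T eta by (intro op_norm_le_ln_trace_mexp) (simp_all add: S_bar_eq_Smat_w_bar transpose_Smat)
  also have "(eta * real T) *\<^sub>R S_bar g mu T w = eta *\<^sub>R ?A"
    using T by (simp add: S_bar_def)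
  also have "ln (trace (mexp (eta *\<^sub>R ?A)))
      \<le> ln (real CARD('p)) + eta * (\<Sum>t=1..T. \<Sum>n\<in>UNIV. w t n * m_round g mu eta w t n)"
    using ln_trace_mexp_sum_le[of "S_round g mu w" eta T]
    by (simp add: S_round_def transpose_Smat mat_inner_Smat m_round_def rho_round_eq_gibbs_state)
  finally show ?thesis
    using T eta by (simp add: divide_right_mono add_divide_distrib mult.commute)
qed

lemma op_norm_S_bar_le_OPT:
  fixes g :: "'n::finite \<Rightarrow> real^'p::finite"
  assumes T: "1 \<le> T" and eps: "0 \<le> eps" "eps < 1" and mu: "mu \<in> convex hull (range g)"
    and run: "mw_mmw_run eps g mu eta_w eta_rho T w"
    and eta: "0 < eta_rho" "0 < eta_w" "eta_w * nu g \<le> 1/2"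
  shows "op_norm (S_bar g mu T w) \<le> (1 + eta_w * nu g) * OPT eps g mu
    + ln (1 / (1 - eps)) / (real T * eta_w) + ln (real CARD('p)) / (real T * eta_rho)"
proof -
  let ?m = "m_round g mu eta_rho w"
  let ?K = "1 + eta_w * nu g"
  let ?err = "ln (1 / (1 - eps)) / (real T * eta_w) + ln (real CARD('p)) / (real T * eta_rho)"
  have mw: "mw_run eps eta_w ?m T w"
    using run by (simp add: mw_mmw_run_iff_mw_run)
  note m = m_round_bounds[OF mu]
  have w: "w t \<in> capped_simplex eps" if "t \<in> {1..T}" for t
    using mw_run_weights[OF eps mw m(2) eta(2,3)] that by auto
  have K: "0 < ?K" using eta(2) nu_nonneg[of g] by (simp add: add_pos_nonneg)
  have "(op_norm (S_bar g mu T w) - ?err) / ?K \<le> OPT eps g mu"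
  proof (rule le_OPT[OF eps])
    fix u :: "'n \<Rightarrow> real" assume u: "u \<in> capped_simplex eps"
    let ?sup = "SUP \<rho>\<in>density_matrices. mat_inner (Smat g mu u) \<rho>"
    let ?R = "\<Sum>t=1..T. \<Sum>n\<in>UNIV. w t n * ?m t n"
    have "eta_w * ?R \<le> ln (1 / (1 - eps)) + eta_w * ?K * (\<Sum>t=1..T. \<Sum>n\<in>UNIV. u n * ?m t n)"
      by (rule mw_regret[OF eps mw m eta(2,3) u])
    also have "\<dots> \<le> ln (1 / (1 - eps)) + eta_w * ?K * (real T * ?sup)"
      using sum_m_round_le_SUP[of u] u eta(2) K
      by (intro add_left_mono mult_left_mono) (auto simp: capped_simplexD)
    finally have "eta_w * ?R / (eta_w * real T)
        \<le> (ln (1 / (1 - eps)) + eta_w * ?K * (real T * ?sup)) / (eta_w * real T)"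
      using T eta(2) by (intro divide_right_mono) auto
    then have "?R / real T \<le> ln (1 / (1 - eps)) / (real T * eta_w) + ?K * ?sup"
      using T eta(2) by (simp add: add_divide_distrib mult.commute)
    moreover have "op_norm (S_bar g mu T w)
        \<le> ln (real CARD('p)) / (real T * eta_rho) + (\<Sum>t=1..T. \<Sum>n\<in>UNIV. w t n * ?m t n) / real T"
      using T eta(1) w capped_simplexD(1) by (intro op_norm_S_bar_le_avg_loss) auto
    ultimately have "op_norm (S_bar g mu T w) - ?err \<le> ?sup * ?K"
      by (simp add: algebra_simps)
    then show "(op_norm (S_bar g mu T w) - ?err) / ?K \<le> ?sup"
      using K by (simp add: pos_divide_le_eq)
  qed
  then show ?thesis using K by (simp add: pos_divide_le_eq algebra_simps)
qed

lemma mw_mmw_guarantee: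
  fixes g :: "'n::finite \<Rightarrow> real^'p::finite"
  assumes T: "1 \<le> T" and eps: "0 \<le> eps" "eps < 1" and mu: "mu \<in> convex hull (range g)"
    and run: "mw_mmw_run eps g mu eta_w eta_rho T w"
    and eta: "0 < eta_rho * nu g" "0 < eta_w * nu g" "eta_w * nu g \<le> 1/2"
  shows "op_norm (S_bar g mu T w) \<le> (1 + eta_rho * nu g) * (1 + eta_w * nu g) * OPT eps g mu
    + (1 + eta_rho * nu g) * ln (1 / (1 - eps)) / (real T * eta_w)
    + ln (real CARD('p)) / (real T * eta_rho)"
proof -
  have "0 < nu g" using eta(1) nu_nonneg[of g] by (metis less_eq_real_def mult_zero_right)
  with eta have pos: "0 < eta_rho" "0 < eta_w" by (simp_all add: zero_less_mult_iff)
  let ?z = "(1 + eta_w * nu g) * OPT eps g mu + ln (1 / (1 - eps)) / (real T * eta_w)"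
  have "0 \<le> (1 + eta_w * nu g) * OPT eps g mu"
    using eta(2) by (intro mult_nonneg_nonneg OPT_nonneg[OF eps]) simp
  moreover have "0 \<le> ln (1 / (1 - eps)) / (real T * eta_w)"
    using eps pos by simp
  ultimately have "?z \<le> (1 + eta_rho * nu g) * ?z"
    using eta(1) by (simp add: mult_le_cancel_right1)
  moreover have "(1 + eta_rho * nu g) * ?z = (1 + eta_rho * nu g) * (1 + eta_w * nu g) * OPT eps g mu
      + (1 + eta_rho * nu g) * ln (1 / (1 - eps)) / (real T * eta_w)"
    by (simp add: algebra_simps)
  ultimately show ?thesis
    using op_norm_S_bar_le_OPT[OF T eps mu run pos eta(3)] by linarith
qed

lemma tuned_step_size:
  fixes L T nu eta :: real
  assumes "0 < nu" "0 < L" "4 * L \<le> T" "eta = (1 / nu) * sqrt (L / T)"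
  shows "eta * nu = sqrt (L / T)" and "0 < sqrt (L / T)" and "sqrt (L / T) \<le> 1/2"
    and "L / (T * eta) = nu * sqrt (L / T)"
proof -
  have T: "0 < T" using assms by linarith
  show "eta * nu = sqrt (L / T)" "0 < sqrt (L / T)" using assms T by simp_all
  have "sqrt (L / T) \<le> sqrt (1/4)" using assms T by (intro real_sqrt_le_mono) (simp add: field_simps)
  then show "sqrt (L / T) \<le> 1/2" by (simp add: real_sqrt_divide)
  have "L / (T * eta) = T * (sqrt (L / T))\<^sup>2 / (T * (sqrt (L / T) / nu))"
    using assms T by simp
  also have "\<dots> = nu * sqrt (L / T)"
    using assms T by (simp add: field_simps power2_eq_square)
  finally show "L / (T * eta) = nu * sqrt (L / T)" .
qed

lemma tuned_bound_arith:
  fixes a b nu opt x :: real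
  assumes a: "0 \<le> a" "a \<le> 1/2" and b: "0 \<le> b" and opt: "0 \<le> opt" "opt \<le> nu"
    and x: "x \<le> (1 + b) * (1 + a) * opt + (1 + b) * (nu * a) + nu * b"
  shows "x - opt \<le> 4 * nu * (a + b)"
proof -
  have nu: "0 \<le> nu" using opt by linarith
  have "x - opt \<le> (a + b + a * b) * opt + nu * a + nu * b + a * (nu * b)"
    using x by (simp add: algebra_simps)
  also have "\<dots> \<le> (a + b + a * b) * nu + nu * a + nu * b + a * (nu * b)"
    using a b opt by (simp add: mult_left_mono)
  also have "\<dots> = 2 * (nu * a) + 2 * (nu * b) + 2 * (a * (nu * b))"
    by (simp add: algebra_simps)
  also have "\<dots> \<le> 4 * (nu * a) + 4 * (nu * b)"
    using mult_right_mono[OF a(2), of "nu * b"] mult_nonneg_nonneg[OF nu a(1)]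
      mult_nonneg_nonneg[OF nu b] by linarith
  also have "\<dots> = 4 * nu * (a + b)"
    by (simp add: algebra_simps)
  finally show ?thesis .
qed

theorem mainTheorem6:
  fixes g :: "'n::finite \<Rightarrow> real^'p::finite"
    and mu :: "real^'p" and eps eta_w eta_rho :: real and T :: nat
    and w :: "nat \<Rightarrow> 'n \<Rightarrow> real"
  assumes T: "T \<ge> 1"
    and eps: "0 \<le> eps" "eps < 1"
    and mu: "mu \<in> convex hull (range g)"
    and run: "mw_mmw_run eps g mu eta_w eta_rho T w"
  shows "(0 < eta_rho * nu g \<and> eta_rho * nu g \<le> 1/2 \<and> 0 < eta_w * nu g \<and> eta_w * nu g \<le> 1/2 \<longrightarrow>
           S_bar g mu T w = Smat g mu (w_bar T w) \<and>
           op_norm (S_bar g mu T w) \<le>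
             (1 + eta_rho * nu g) * (1 + eta_w * nu g) * OPT eps g mu
             + (1 + eta_rho * nu g) * ln (1 / (1 - eps)) / (real T * eta_w)
             + ln (real CARD('p)) / (real T * eta_rho))
       \<and> (0 < nu g \<and> 0 < eps \<and> CARD('p) \<ge> 2 \<and>
           eta_w = (1 / nu g) * sqrt (ln (1 / (1 - eps)) / real T) \<and>
           eta_rho = (1 / nu g) * sqrt (ln (real CARD('p)) / real T) \<and>
           real T \<ge> 4 * max (ln (1 / (1 - eps))) (ln (real CARD('p))) \<longrightarrow>
           gamma_val g mu (w_bar T w) - OPT eps g mu
             \<le> 4 * nu g * (sqrt (ln (1 / (1 - eps)) / real T) + sqrt (ln (real CARD('p)) / real T)))"
proof (intro conjI impI)
  assume "0 < eta_rho * nu g \<and> eta_rho * nu g \<le> 1/2 \<and> 0 < eta_w * nu g \<and> eta_w * nu g \<le> 1/2"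
  then show "S_bar g mu T w = Smat g mu (w_bar T w)"
    and "op_norm (S_bar g mu T w) \<le> (1 + eta_rho * nu g) * (1 + eta_w * nu g) * OPT eps g mu
      + (1 + eta_rho * nu g) * ln (1 / (1 - eps)) / (real T * eta_w)
      + ln (real CARD('p)) / (real T * eta_rho)"
    using S_bar_eq_Smat_w_bar mw_mmw_guarantee[OF T eps mu run] by auto
next
  let ?L = "ln (1 / (1 - eps))" and ?P = "ln (real CARD('p))"
  assume h: "0 < nu g \<and> 0 < eps \<and> CARD('p) \<ge> 2 \<and>
    eta_w = (1 / nu g) * sqrt (?L / real T) \<and> eta_rho = (1 / nu g) * sqrt (?P / real T) \<and>
    real T \<ge> 4 * max ?L ?P"
  have "0 < ?L" "0 < ?P" using h eps by simp_all
  with h have w: "eta_w * nu g = sqrt (?L / real T)" "0 < sqrt (?L / real T)" "sqrt (?L / real T) \<le> 1/2"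
      "?L / (real T * eta_w) = nu g * sqrt (?L / real T)"
    and r: "eta_rho * nu g = sqrt (?P / real T)" "0 < sqrt (?P / real T)"
      "?P / (real T * eta_rho) = nu g * sqrt (?P / real T)"
    using tuned_step_size[of "nu g" ?L "real T" eta_w] tuned_step_size[of "nu g" ?P "real T" eta_rho]
    by auto
  have "op_norm (S_bar g mu T w) \<le> (1 + eta_rho * nu g) * (1 + eta_w * nu g) * OPT eps g mu
      + (1 + eta_rho * nu g) * ?L / (real T * eta_w) + ?P / (real T * eta_rho)"
    using w r by (intro mw_mmw_guarantee[OF T eps mu run]) simp_all
  then show "gamma_val g mu (w_bar T w) - OPT eps g mu
      \<le> 4 * nu g * (sqrt (?L / real T) + sqrt (?P / real T))"
    unfolding gamma_val_def S_bar_eq_Smat_w_bar[symmetric] w r times_divide_eq_right[symmetric]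
    using w r OPT_nonneg[OF eps] OPT_le_nu[OF eps mu]
    by (intro tuned_bound_arith) simp_all
qed

end
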